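(* Let $S$ be a compact convex subset of $\mathbb{R}^n_+$ with $0\in S$ and let $\Gamma\neq\mathbb{R}^n$ be a closed convex cone in $\mathbb{R}^n$ containing at least one point of $]0,\infty[^n$. Then $$\widehat S_\Gamma=(S-\Gamma^\circ)\cap\mathbb{R}^n_+,$$ and $\varphi_{\widehat S_\Gamma}(\xi)=\varphi_S(\xi)$ for every $\xi\in\Gamma$. Moreover, if for every $\xi\in\mathbb{R}^n$ and every extreme point $x$ of $\widehat S_\Gamma$ there exists $\eta\in\Gamma$ such that $\langle x,\xi\rangle\le\langle x,\eta\rangle$ and $\varphi_S(\eta)=\varphi_S(\xi)$, then $S=\widehat S_\Gamma$.
   Context: $\mathbb{R}_+=[0,\infty)$. For a set $T\subset\mathbb{R}^n$, $\varphi_T(\xi)=\sup_{t\in T}\langle t,\xi\rangle$. A cone is a set $\Gamma$ with $t\xi\in\Gamma$ for $\xi\in\Gamma$, $t\ge0$. The dual cone is $\Gamma^\circ=\{x\in\mathbb{R}^n\,;\,\langle x,\xi\rangle\ge0\ \forall\xi\in\Gamma\}$. The $\Gamma$-hull of $S\subset\mathbb{R}^n_+$ is $\widehat S_\Gamma=\{x\in\mathbb{R}^n_+\,;\,\langle x,\xi\rangle\le\varphi_S(\xi)\ \forall\xi\in\Gamma\}$, and $S-\Gamma^\circ=\{s-t\,;\,s\in S,t\in\Gamma^\circ\}$. *)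

theory Defs
  imports "HOL-Analysis.Analysis"
begin

definition nonneg_orthant :: "(real^'n) set" where
  "nonneg_orthant = {x. \<forall>i. 0 \<le> x $ i}"

definition pos_orthant :: "(real^'n) set" where
  "pos_orthant = {x. \<forall>i. 0 < x $ i}"

definition supp_fun :: "(real^'n) set \<Rightarrow> real^'n \<Rightarrow> real" where
  "supp_fun T \<xi> = (SUP t\<in>T. t \<bullet> \<xi>)"

definition is_cone :: "(real^'n) set \<Rightarrow> bool" where
  "is_cone \<Gamma> \<longleftrightarrow> (\<forall>\<xi>\<in>\<Gamma>. \<forall>t::real. t \<ge> 0 \<longrightarrow> t *\<^sub>R \<xi> \<in> \<Gamma>)"

definition dual_cone :: "(real^'n) set \<Rightarrow> (real^'n) set" where
  "dual_cone \<Gamma> = {x. \<forall>\<xi>\<in>\<Gamma>. 0 \<le> x \<bullet> \<xi>}"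

definition gamma_hull :: "(real^'n) set \<Rightarrow> (real^'n) set \<Rightarrow> (real^'n) set" where
  "gamma_hull \<Gamma> S = {x \<in> nonneg_orthant. \<forall>\<xi>\<in>\<Gamma>. x \<bullet> \<xi> \<le> supp_fun S \<xi>}"

definition set_minus_set :: "(real^'n) set \<Rightarrow> (real^'n) set \<Rightarrow> (real^'n) set" where
  "set_minus_set S T = {s - t | s t. s \<in> S \<and> t \<in> T}"

end

theory Submission
  imports Defs
begin

(*
  A point x of the orthant outside the closed convex set S - \<Gamma>\<degree> is separated from it by a
  hyperplane with normal \<xi>. Since \<Gamma>\<degree> is a cone, \<xi> lies in the bidual cone \<Gamma>\<degree>\<degree> = \<Gamma>,
  and the separation gives <x,\<xi>> > \<phi>_S(\<xi>), so x is not in the \<Gamma>-hull; the reverse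
  inclusion is immediate. The support functions agree on \<Gamma> because S lies in the \<Gamma>-hull,
  on which <.,\<xi>> is bounded by \<phi>_S(\<xi>). A strictly positive vector of \<Gamma> bounds the
  \<Gamma>-hull, which is therefore the convex hull of its extreme points (Krein-Milman). An extreme
  point x outside S would be separated from S by some \<xi> with <x,\<xi>> > \<phi>_S(\<xi>); the
  hypothesis trades \<xi> for some \<eta> \<in> \<Gamma>, contradicting the defining inequality of the \<Gamma>-hull.
*)

lemma supp_fun_upper:
  fixes S :: "(real^'n) set"
  assumes "bounded S" "s \<in> S"
  shows "s \<bullet> \<xi> \<le> supp_fun S \<xi>"
proof -
  have "bounded ((\<lambda>t. t \<bullet> \<xi>) ` S)"
    using bounded_linear_image[OF assms(1) bounded_linear_inner_left] .
  then show ?thesis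
    unfolding supp_fun_def using assms(2) by (intro cSUP_upper2 bounded_imp_bdd_above) auto
qed

lemma supp_fun_least:
  fixes S :: "(real^'n) set"
  assumes "S \<noteq> {}" "\<And>s. s \<in> S \<Longrightarrow> s \<bullet> \<xi> \<le> c"
  shows "supp_fun S \<xi> \<le> c"
  unfolding supp_fun_def using assms by (intro cSUP_least) auto

lemma supp_fun_uminus_le:
  fixes S :: "(real^'n) set"
  assumes "S \<noteq> {}" "\<And>s. s \<in> S \<Longrightarrow> b \<le> a \<bullet> s"
  shows "supp_fun S (- a) \<le> - b"
  using assms by (intro supp_fun_least) (auto simp: inner_commute)

lemma is_cone_inner_bounded_above_imp_nonpos:
  fixes C :: "(real^'n) set"
  assumes "is_cone C" "\<And>t. t \<in> C \<Longrightarrow> a \<bullet> t < c" "t \<in> C"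
  shows "a \<bullet> t \<le> 0"
proof (rule ccontr)
  assume pos: "\<not> a \<bullet> t \<le> 0"
  define l where "l = \<bar>c\<bar> / (a \<bullet> t)"
  have "l \<ge> 0" using pos by (simp add: l_def)
  then have "a \<bullet> (l *\<^sub>R t) < c"
    using assms unfolding is_cone_def by blast
  moreover have "a \<bullet> (l *\<^sub>R t) = \<bar>c\<bar>" using pos by (simp add: l_def)
  ultimately show False by linarith
qed

lemma is_cone_dual_cone: "is_cone (dual_cone \<Gamma>)"
  unfolding is_cone_def dual_cone_def by simp

lemma convex_dual_cone: "convex (dual_cone \<Gamma>)"
  unfolding dual_cone_def convex_def by (auto simp: inner_add_left)

lemma closed_dual_cone: "closed (dual_cone \<Gamma>)"
proof -
  have "dual_cone \<Gamma> = (\<Inter>\<xi>\<in>\<Gamma>. {x. 0 \<le> x \<bullet> \<xi>})" unfolding dual_cone_def by blast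
  then show ?thesis by (auto intro!: closed_INT closed_Collect_le continuous_intros)
qed

lemma dual_cone_dual_cone:
  fixes \<Gamma> :: "(real^'n) set"
  assumes "is_cone \<Gamma>" "closed \<Gamma>" "convex \<Gamma>" "\<Gamma> \<noteq> {}"
  shows "dual_cone (dual_cone \<Gamma>) = \<Gamma>"
proof
  show "\<Gamma> \<subseteq> dual_cone (dual_cone \<Gamma>)"
    unfolding dual_cone_def by (auto simp: inner_commute)
next
  show "dual_cone (dual_cone \<Gamma>) \<subseteq> \<Gamma>"
  proof
    fix \<xi> assume \<xi>: "\<xi> \<in> dual_cone (dual_cone \<Gamma>)"
    show "\<xi> \<in> \<Gamma>"
    proof (rule ccontr)
      assume "\<xi> \<notin> \<Gamma>"
      then obtain a b where sep: "a \<bullet> \<xi> < b" "\<And>x. x \<in> \<Gamma> \<Longrightarrow> b < a \<bullet> x"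
        using separating_hyperplane_closed_point[OF assms(3,2)] by blast
      have "0 \<in> \<Gamma>"
        using assms(1,4) unfolding is_cone_def by (metis ex_in_conv order_refl scaleR_zero_left)
      then have "b < 0" using sep(2) by force
      have "(- a) \<bullet> x \<le> 0" if "x \<in> \<Gamma>" for x
        using is_cone_inner_bounded_above_imp_nonpos[OF assms(1) _ that, of "- a" "- b"] sep(2)
        by force
      then have "a \<in> dual_cone \<Gamma>" unfolding dual_cone_def by simp
      then have "0 \<le> \<xi> \<bullet> a" using \<xi> unfolding dual_cone_def by blast
      then show False using sep(1) \<open>b < 0\<close> by (simp add: inner_commute)
    qed
  qed
qed

lemma set_minus_set_eq_differences:
  "set_minus_set S T = (\<Union>x\<in>S. \<Union>y\<in>T. {x - y})"
  unfolding set_minus_set_def by blast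

lemma convex_set_minus_set: "convex S \<Longrightarrow> convex T \<Longrightarrow> convex (set_minus_set S T)"
  unfolding set_minus_set_eq_differences by (rule convex_differences)

lemma closed_set_minus_set: "compact S \<Longrightarrow> closed T \<Longrightarrow> closed (set_minus_set S T)"
  unfolding set_minus_set_eq_differences by (rule compact_closed_differences)

lemma set_minus_dual_cone_subset_gamma_hull:
  fixes S \<Gamma> :: "(real^'n) set"
  assumes "bounded S"
  shows "set_minus_set S (dual_cone \<Gamma>) \<inter> nonneg_orthant \<subseteq> gamma_hull \<Gamma> S"
proof
  fix x assume x: "x \<in> set_minus_set S (dual_cone \<Gamma>) \<inter> nonneg_orthant"
  then obtain s t where st: "x = s - t" "s \<in> S" "t \<in> dual_cone \<Gamma>"
    unfolding set_minus_set_def by blast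
  have "x \<bullet> \<xi> \<le> supp_fun S \<xi>" if "\<xi> \<in> \<Gamma>" for \<xi>
  proof -
    have "x \<bullet> \<xi> \<le> s \<bullet> \<xi>"
      using st that by (simp add: dual_cone_def inner_diff_left)
    also have "\<dots> \<le> supp_fun S \<xi>" using supp_fun_upper[OF assms st(2)] .
    finally show ?thesis .
  qed
  then show "x \<in> gamma_hull \<Gamma> S" using x unfolding gamma_hull_def by blast
qed

lemma gamma_hull_subset_set_minus_dual_cone:
  fixes S \<Gamma> :: "(real^'n) set"
  assumes "compact S" "convex S" "S \<noteq> {}"
    and "is_cone \<Gamma>" "closed \<Gamma>" "convex \<Gamma>" "\<Gamma> \<noteq> {}"
  shows "gamma_hull \<Gamma> S \<subseteq> set_minus_set S (dual_cone \<Gamma>) \<inter> nonneg_orthant"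
proof
  fix x assume xH: "x \<in> gamma_hull \<Gamma> S"
  have "x \<in> set_minus_set S (dual_cone \<Gamma>)"
  proof (rule ccontr)
    assume "x \<notin> set_minus_set S (dual_cone \<Gamma>)"
    then obtain a b where sep: "a \<bullet> x < b"
      "\<And>y. y \<in> set_minus_set S (dual_cone \<Gamma>) \<Longrightarrow> b < a \<bullet> y"
      using separating_hyperplane_closed_point[OF convex_set_minus_set[OF assms(2) convex_dual_cone]
          closed_set_minus_set[OF assms(1) closed_dual_cone]] by blast
    have sep': "b < a \<bullet> s - a \<bullet> t" if "s \<in> S" "t \<in> dual_cone \<Gamma>" for s t
      using sep(2)[of "s - t"] that unfolding set_minus_set_def by (auto simp: inner_diff_right)
    obtain s0 where "s0 \<in> S" using assms(3) by blast
    have "a \<bullet> t \<le> 0" if "t \<in> dual_cone \<Gamma>" for t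
      using is_cone_inner_bounded_above_imp_nonpos[OF is_cone_dual_cone _ that, of a "a \<bullet> s0 - b"]
        sep' \<open>s0 \<in> S\<close> by force
    then have "- a \<in> dual_cone (dual_cone \<Gamma>)"
      unfolding dual_cone_def by (auto simp: inner_commute)
    then have "- a \<in> \<Gamma>" using dual_cone_dual_cone[OF assms(4-7)] by simp
    have "b < a \<bullet> s" if "s \<in> S" for s
      using sep'[OF that, of 0] by (simp add: dual_cone_def)
    then have "supp_fun S (- a) \<le> - b"
      using assms(3) by (intro supp_fun_uminus_le) (auto simp: less_imp_le)
    then have "x \<bullet> (- a) \<le> - b" using xH \<open>- a \<in> \<Gamma>\<close> unfolding gamma_hull_def by fastforce
    then show False using sep(1) by (simp add: inner_commute)
  qed
  then show "x \<in> set_minus_set S (dual_cone \<Gamma>) \<inter> nonneg_orthant"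
    using xH unfolding gamma_hull_def by blast
qed

lemma subset_gamma_hull:
  fixes S \<Gamma> :: "(real^'n) set"
  assumes "bounded S" "S \<subseteq> nonneg_orthant"
  shows "S \<subseteq> gamma_hull \<Gamma> S"
  unfolding gamma_hull_def using assms supp_fun_upper by blast

lemma supp_fun_gamma_hull:
  fixes S \<Gamma> :: "(real^'n) set"
  assumes "bounded S" "S \<subseteq> nonneg_orthant" "S \<noteq> {}" "\<xi> \<in> \<Gamma>"
  shows "supp_fun (gamma_hull \<Gamma> S) \<xi> = supp_fun S \<xi>"
proof (rule antisym)
  have SH: "S \<subseteq> gamma_hull \<Gamma> S" using subset_gamma_hull[OF assms(1,2)] .
  then show "supp_fun (gamma_hull \<Gamma> S) \<xi> \<le> supp_fun S \<xi>"
    using assms(3,4) by (intro supp_fun_least) (auto simp: gamma_hull_def)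
  have "bdd_above ((\<lambda>t. t \<bullet> \<xi>) ` gamma_hull \<Gamma> S)"
    using assms(4) unfolding bdd_above_def gamma_hull_def by blast
  then show "supp_fun S \<xi> \<le> supp_fun (gamma_hull \<Gamma> S) \<xi>"
    using assms(3) SH unfolding supp_fun_def by (intro cSUP_least cSUP_upper2) auto
qed

lemma convex_gamma_hull: "convex (gamma_hull \<Gamma> S)"
proof -
  have "gamma_hull \<Gamma> S = {x. \<forall>i. 0 \<le> x $ i} \<inter> (\<Inter>\<xi>\<in>\<Gamma>. {x. \<xi> \<bullet> x \<le> supp_fun S \<xi>})"
    unfolding gamma_hull_def nonneg_orthant_def by (auto simp: inner_commute)
  moreover have "convex {x::real^'n. \<forall>i. 0 \<le> x $ i}"
    by (rule convex_box_cart) (simp add: atLeast_def[symmetric])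
  ultimately show ?thesis by (auto intro!: convex_Int convex_INT convex_halfspace_le)
qed

lemma closed_gamma_hull: "closed (gamma_hull \<Gamma> S)"
proof -
  have "gamma_hull \<Gamma> S = (\<Inter>i. {x. 0 \<le> x $ i}) \<inter> (\<Inter>\<xi>\<in>\<Gamma>. {x. x \<bullet> \<xi> \<le> supp_fun S \<xi>})"
    unfolding gamma_hull_def nonneg_orthant_def by blast
  then show ?thesis by (auto intro!: closed_Int closed_INT closed_Collect_le continuous_intros)
qed

lemma bounded_gamma_hull:
  fixes S \<Gamma> :: "(real^'n) set"
  assumes "\<Gamma> \<inter> pos_orthant \<noteq> {}"
  shows "bounded (gamma_hull \<Gamma> S)"
proof -
  obtain p where p: "p \<in> \<Gamma>" "\<And>i. 0 < p $ i"
    using assms unfolding pos_orthant_def by blast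
  have "gamma_hull \<Gamma> S \<subseteq> cbox 0 (\<chi> i. supp_fun S p / p $ i)"
  proof
    fix x assume xH: "x \<in> gamma_hull \<Gamma> S"
    have nonneg: "\<And>j. 0 \<le> x $ j" using xH unfolding gamma_hull_def nonneg_orthant_def by blast
    have "x $ i \<le> supp_fun S p / p $ i" for i
    proof -
      have "x $ i * p $ i \<le> (\<Sum>j\<in>UNIV. x $ j * p $ j)"
        using nonneg p(2) by (intro member_le_sum) (auto simp: less_imp_le)
      also have "\<dots> = x \<bullet> p" by (simp add: inner_vec_def)
      also have "\<dots> \<le> supp_fun S p" using xH p(1) unfolding gamma_hull_def by blast
      finally show ?thesis using p(2) by (simp add: pos_le_divide_eq)
    qed
    then show "x \<in> cbox 0 (\<chi> i. supp_fun S p / p $ i)" using nonneg by (simp add: mem_box_cart)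
  qed
  then show ?thesis using bounded_cbox bounded_subset by blast
qed

lemma mem_if_gamma_dominated:
  fixes S \<Gamma> :: "(real^'n) set"
  assumes "closed S" "convex S" "S \<noteq> {}" "x \<in> gamma_hull \<Gamma> S"
    and "\<And>\<xi>. \<exists>\<eta>\<in>\<Gamma>. x \<bullet> \<xi> \<le> x \<bullet> \<eta> \<and> supp_fun S \<eta> = supp_fun S \<xi>"
  shows "x \<in> S"
proof (rule ccontr)
  assume "x \<notin> S"
  then obtain a b where sep: "a \<bullet> x < b" "\<And>y. y \<in> S \<Longrightarrow> b < a \<bullet> y"
    using separating_hyperplane_closed_point[OF assms(2,1)] by blast
  have "supp_fun S (- a) \<le> - b"
    using assms(3) sep(2) by (intro supp_fun_uminus_le) (auto simp: less_imp_le)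
  moreover obtain \<eta> where \<eta>: "\<eta> \<in> \<Gamma>" "x \<bullet> (- a) \<le> x \<bullet> \<eta>" "supp_fun S \<eta> = supp_fun S (- a)"
    using assms(5) by blast
  moreover have "x \<bullet> \<eta> \<le> supp_fun S \<eta>" using assms(4) \<eta>(1) unfolding gamma_hull_def by blast
  ultimately show False using sep(1) by (simp add: inner_commute)
qed

theorem proposition5p6:
  fixes S \<Gamma> :: "(real^'n) set"
  assumes "compact S" "convex S" "S \<subseteq> nonneg_orthant" "0 \<in> S"
    and "is_cone \<Gamma>" "closed \<Gamma>" "convex \<Gamma>" "\<Gamma> \<noteq> UNIV"
    and "\<Gamma> \<inter> pos_orthant \<noteq> {}"
  shows "gamma_hull \<Gamma> S = set_minus_set S (dual_cone \<Gamma>) \<inter> nonneg_orthant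
    \<and> (\<forall>\<xi>\<in>\<Gamma>. supp_fun (gamma_hull \<Gamma> S) \<xi> = supp_fun S \<xi>)
    \<and> ((\<forall>\<xi>. \<forall>x. x extreme_point_of (gamma_hull \<Gamma> S) \<longrightarrow>
            (\<exists>\<eta>\<in>\<Gamma>. x \<bullet> \<xi> \<le> x \<bullet> \<eta> \<and> supp_fun S \<eta> = supp_fun S \<xi>))
         \<longrightarrow> S = gamma_hull \<Gamma> S)"
proof (intro conjI impI ballI)
  have "S \<noteq> {}" "\<Gamma> \<noteq> {}" "bounded S" using assms(1,4,9) compact_imp_bounded by auto
  show "gamma_hull \<Gamma> S = set_minus_set S (dual_cone \<Gamma>) \<inter> nonneg_orthant"
    using gamma_hull_subset_set_minus_dual_cone[OF assms(1,2) \<open>S \<noteq> {}\<close> assms(5-7) \<open>\<Gamma> \<noteq> {}\<close>]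
      set_minus_dual_cone_subset_gamma_hull[OF \<open>bounded S\<close>] by (rule antisym)
  show "supp_fun (gamma_hull \<Gamma> S) \<xi> = supp_fun S \<xi>" if "\<xi> \<in> \<Gamma>" for \<xi>
    using supp_fun_gamma_hull[OF \<open>bounded S\<close> assms(3) \<open>S \<noteq> {}\<close> that] .
  assume dominated: "\<forall>\<xi>. \<forall>x. x extreme_point_of (gamma_hull \<Gamma> S) \<longrightarrow>
            (\<exists>\<eta>\<in>\<Gamma>. x \<bullet> \<xi> \<le> x \<bullet> \<eta> \<and> supp_fun S \<eta> = supp_fun S \<xi>)"
  have "{x. x extreme_point_of (gamma_hull \<Gamma> S)} \<subseteq> S"
    using mem_if_gamma_dominated[OF compact_imp_closed[OF assms(1)] assms(2) \<open>S \<noteq> {}\<close>] dominated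
    by (auto simp: extreme_point_of_def)
  moreover have "compact (gamma_hull \<Gamma> S)"
    using closed_gamma_hull bounded_gamma_hull[OF assms(9)] by (simp add: compact_eq_bounded_closed)
  ultimately have "gamma_hull \<Gamma> S \<subseteq> S"
    using Krein_Milman_Minkowski[OF _ convex_gamma_hull] assms(2) by (metis hull_minimal)
  then show "S = gamma_hull \<Gamma> S" using subset_gamma_hull[OF \<open>bounded S\<close> assms(3)] by blast
qed

end
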